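(* Let $\delta\ge1$ be an integer. Under the AMC policy, for every characteristic function $v\in V_\delta$ and every arrival order $\pi$, the coalition structure $C_g$ formed by greedy players satisfies $|S|\le\delta$ for every $S\in C_g$.
   Context: Players: a finite set $N=\{a_1,\dots,a_n\}$. A characteristic function is $v:2^N\to\mathbb{R}_{\ge 0}$ with $v(\emptyset)=0$. There are fixed constants $0<\mathsf{min}\le\mathsf{max}$ and $v$ is monotone and bounded: $\mathsf{min}\le v(S)\le v(T)\le\mathsf{max}$ for all nonempty $S\subseteq T\subseteq N$. $V_\delta$ is the set of such $v$ with $\delta\cdot\mathsf{min}\le\mathsf{max}<(\delta+1)\cdot\mathsf{min}$. Online process: an arrival order is a permutation $\pi=(\pi_1,\dots,\pi_n)$ of $N$; player $\pi_t$ arrives at time $t$; $\pi_{\prec t}$ is the set of players arriving before time $t$ and $\pi^{-1}(i)$ the arrival time of $i$. For $S\subseteq N$, $\pi_{|S}$ denotes the players of $S$ in the relative order of $\pi$. Let $C^{t-1}$ be the coalition structure of players arrived before time $t$ ($C^0=\emptyset$). At time $t$, player $\pi_t$ either joins an existing coalition $S\in C^{t-1}$ or forms $\{\pi_t\}$ (choice $S=\emptyset$); decisions are never revised. AMC policy: for a coalition $S$ and $i\in S$, $\varphi_i(S,\pi_{|S})=v((\pi_{\prec\pi^{-1}(i)}\cap S)\cup\{i\})-v(\pi_{\prec\pi^{-1}(i)}\cap S)$. Greedy players: $\pi_t$ chooses $S\in C^{t-1}\cup\{\emptyset\}$ maximizing $\varphi_{\pi_t}(S\cup\{\pi_t\},\pi_{|S\cup\{\pi_t\}})$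 (predetermined tie-breaking); $C_g$ is the final structure after all $n$ arrivals. *)

theory Defs
  imports Complex_Main
begin

(* Arrival order: a list \<pi>, distinct, listing all players.
   pred_set \<pi> i = players arriving before i, i.e. pi_{<\<pi>^{-1}(i)}. *)
definition pred_set :: "'a list \<Rightarrow> 'a \<Rightarrow> 'a set" where
  "pred_set \<pi> i = set (takeWhile (\<lambda>x. x \<noteq> i) \<pi>)"

definition amc :: "('a set \<Rightarrow> real) \<Rightarrow> 'a list \<Rightarrow> 'a set \<Rightarrow> 'a \<Rightarrow> real" where
  "amc v \<pi> S i = v ((pred_set \<pi> i \<inter> S) \<union> {i}) - v (pred_set \<pi> i \<inter> S)"

(* greedy_run v \<pi> t C : C is a coalition structure C^t obtainable after the first t
   arrivals when each arriving player greedily chooses an option maximizing its AMC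
   payoff (any tie-breaking; S = {} means forming a singleton). *)
inductive greedy_run :: "('a set \<Rightarrow> real) \<Rightarrow> 'a list \<Rightarrow> nat \<Rightarrow> 'a set set \<Rightarrow> bool"
  for v :: "'a set \<Rightarrow> real" and \<pi> :: "'a list" where
  start: "greedy_run v \<pi> 0 {}"
| step: "\<lbrakk> greedy_run v \<pi> t C; t < length \<pi>;
          S \<in> insert {} C;
          \<forall>S' \<in> insert {} C. amc v \<pi> (S' \<union> {\<pi> ! t}) (\<pi> ! t) \<le> amc v \<pi> (S \<union> {\<pi> ! t}) (\<pi> ! t) \<rbrakk>
         \<Longrightarrow> greedy_run v \<pi> (Suc t) (insert (S \<union> {\<pi> ! t}) (C - {S}))"

end

theory Submission
  imports Defs
begin

text \<open>An arriving player can always stay alone and earn its stand-alone value, which is at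
  least \<open>min\<close>. Hence a greedy player joins a coalition \<open>S\<close> only if its AMC payoff
  \<open>v (S \<union> {i}) - v S\<close> is at least \<open>min\<close>, so every coalition of the final structure has
  \<open>v S \<ge> |S| \<cdot> min\<close>. Together with \<open>v S \<le> max < (\<delta> + 1) \<cdot> min\<close> this gives \<open>|S| \<le> \<delta>\<close>.\<close>

lemma takeWhile_neq_append:
  "y \<notin> set xs \<Longrightarrow> takeWhile (\<lambda>x. x \<noteq> y) (xs @ y # ys) = xs"
  by (induction xs) auto

lemma nth_notin_set_take:
  "distinct xs \<Longrightarrow> t < length xs \<Longrightarrow> xs ! t \<notin> set (take t xs)"
  by (metis id_take_nth_drop distinct_append distinct.simps(2) not_distinct_conv_prefix)

lemma pred_set_nth:
  assumes "distinct \<pi>" "t < length \<pi>"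
  shows "pred_set \<pi> (\<pi> ! t) = set (take t \<pi>)"
proof -
  have "\<pi> = take t \<pi> @ \<pi> ! t # drop (Suc t) \<pi>"
    using assms(2) by (rule id_take_nth_drop)
  then have "takeWhile (\<lambda>x. x \<noteq> \<pi> ! t) \<pi> = take t \<pi>"
    using takeWhile_neq_append[OF nth_notin_set_take[OF assms]] by metis
  then show ?thesis
    by (simp add: pred_set_def)
qed

lemma amc_join_prefix:
  assumes "distinct \<pi>" "t < length \<pi>" "S \<subseteq> set (take t \<pi>)"
  shows "amc v \<pi> (S \<union> {\<pi> ! t}) (\<pi> ! t) = v (S \<union> {\<pi> ! t}) - v S"
proof -
  have "pred_set \<pi> (\<pi> ! t) \<inter> (S \<union> {\<pi> ! t}) = S"
    using assms pred_set_nth[OF assms(1,2)] nth_notin_set_take[OF assms(1,2)] by auto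
  then show ?thesis
    by (simp add: amc_def)
qed

lemma greedy_run_coalitions_prefix:
  assumes "greedy_run v \<pi> t C"
  shows "\<forall>S\<in>C. S \<noteq> {} \<and> S \<subseteq> set (take t \<pi>)"
  using assms
proof (induction rule: greedy_run.induct)
  case start
  then show ?case by simp
next
  case (step t C S)
  have "set (take (Suc t) \<pi>) = insert (\<pi> ! t) (set (take t \<pi>))"
    using step.hyps(2) by (simp add: take_Suc_conv_app_nth)
  then show ?case
    using step.IH step.hyps(3) by auto
qed

lemma greedy_run_value_ge_card:
  assumes run: "greedy_run v \<pi> t C"
    and "distinct \<pi>" and "v {} = 0"
    and singleton_ge: "\<forall>x\<in>set \<pi>. vmin \<le> v {x}"
  shows "\<forall>S\<in>C. real (card S) * vmin \<le> v S"
  using run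
proof (induction rule: greedy_run.induct)
  case start
  then show ?case by simp
next
  case (step t C S)
  let ?x = "\<pi> ! t"
  have x_min: "vmin \<le> v {?x}"
    using singleton_ge step.hyps(2) by simp
  have "real (card (S \<union> {?x})) * vmin \<le> v (S \<union> {?x})"
  proof (cases "S = {}")
    case True
    then show ?thesis using x_min by simp
  next
    case False
    then have "S \<in> C" using step.hyps(3) by simp
    then have S_prefix: "S \<subseteq> set (take t \<pi>)" and S_value: "real (card S) * vmin \<le> v S"
      using greedy_run_coalitions_prefix[OF step.hyps(1)] step.IH by auto
    have "amc v \<pi> ({} \<union> {?x}) ?x \<le> amc v \<pi> (S \<union> {?x}) ?x"
      using step.hyps(4) by blast
    then have gain: "v {?x} \<le> v (S \<union> {?x}) - v S"
      using amc_join_prefix[OF \<open>distinct \<pi>\<close> step.hyps(2)] S_prefix \<open>v {} = 0\<close> by simp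
    have "finite S" "?x \<notin> S"
      using S_prefix nth_notin_set_take[OF \<open>distinct \<pi>\<close> step.hyps(2)] finite_subset by auto
    then have "card (S \<union> {?x}) = card S + 1"
      by simp
    then show ?thesis
      using S_value gain x_min by (simp add: algebra_simps)
  qed
  then show ?case
    using step.IH by auto
qed

theorem lemma2:
  fixes N :: "'a set" and v :: "'a set \<Rightarrow> real" and vmin vmax :: real
    and \<delta> :: nat and \<pi> :: "'a list" and C :: "'a set set"
  assumes "finite N"
    and "0 < vmin" and "vmin \<le> vmax"
    and "v {} = 0"
    and "\<forall>S T. S \<noteq> {} \<and> S \<subseteq> T \<and> T \<subseteq> N \<longrightarrow> vmin \<le> v S \<and> v S \<le> v T \<and> v T \<le> vmax"
    and "\<delta> \<ge> 1"
    and "real \<delta> * vmin \<le> vmax" and "vmax < (real \<delta> + 1) * vmin"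
    and "distinct \<pi>" and "set \<pi> = N"
    and "greedy_run v \<pi> (length \<pi>) C"
  shows "\<forall>S \<in> C. card S \<le> \<delta>"
proof
  fix S assume "S \<in> C"
  have "\<forall>x\<in>set \<pi>. vmin \<le> v {x}"
    using assms(5,10) by blast
  then have "real (card S) * vmin \<le> v S"
    using greedy_run_value_ge_card[OF assms(11,9,4)] \<open>S \<in> C\<close> by blast
  moreover have "S \<noteq> {}" "S \<subseteq> N"
    using greedy_run_coalitions_prefix[OF assms(11)] \<open>S \<in> C\<close> assms(10) by auto
  then have "v S \<le> vmax"
    using assms(5) by blast
  ultimately have "real (card S) * vmin < (real \<delta> + 1) * vmin"
    using assms(8) by linarith
  then show "card S \<le> \<delta>"
    using assms(2) by simp
qed

end
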